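(* Let $p,q$ be distinct prime numbers and let $G=\langle a,s,t \mid sas^{-1}=a^p,\ tat^{-1}=a^q\rangle$. Then $C_G(t)=\langle t\rangle$, $C_G(s)=\langle s\rangle$, and for every integer $i\geq 0$ we have $C_G(st^i)=\langle st^i\rangle$.
   Context: For a group $G$ and $g\in G$, $C_G(g)=\{h\in G\mid gh=hg\}$ is the centraliser of $g$. *)

theory Defs
  imports "HOL-Algebra.Algebra" "HOL-Computational_Algebra.Primes"
begin

definition centraliser :: "('a, 'b) monoid_scheme \<Rightarrow> 'a \<Rightarrow> 'a set" where
  "centraliser G g = {h \<in> carrier G. g \<otimes>\<^bsub>G\<^esub> h = h \<otimes>\<^bsub>G\<^esub> g}"

datatype gen = GA | GS | GT

text \<open>A letter is a generator with a sign: True = the generator, False = its inverse.\<close>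
type_synonym letter = "gen \<times> bool"

definition inv_letter :: "letter \<Rightarrow> letter" where
  "inv_letter x = (fst x, \<not> snd x)"

definition relators :: "nat \<Rightarrow> nat \<Rightarrow> letter list set" where
  "relators p q =
     {[(GS, True), (GA, True), (GS, False)] @ replicate p (GA, False),
      [(GT, True), (GA, True), (GT, False)] @ replicate q (GA, False)}"

inductive_set del_step :: "nat \<Rightarrow> nat \<Rightarrow> (letter list \<times> letter list) set"
  for p q :: nat where
  cancel: "(u @ [x, inv_letter x] @ v, u @ v) \<in> del_step p q"
| relator: "r \<in> relators p q \<Longrightarrow> (u @ r @ v, u @ v) \<in> del_step p q"

definition word_eq :: "nat \<Rightarrow> nat \<Rightarrow> (letter list \<times> letter list) set" where
  "word_eq p q = (del_step p q \<union> (del_step p q)\<inverse>)\<^sup>*"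

definition BS_group :: "nat \<Rightarrow> nat \<Rightarrow> letter list set monoid" where
  "BS_group p q =
     \<lparr>carrier = UNIV // word_eq p q,
      monoid.mult = (\<lambda>U V. \<Union>x\<in>U. \<Union>y\<in>V. word_eq p q `` {x @ y}),
      one = word_eq p q `` {[]}\<rparr>"

definition gen_elem :: "nat \<Rightarrow> nat \<Rightarrow> gen \<Rightarrow> letter list set" where
  "gen_elem p q x = word_eq p q `` {[(x, True)]}"

end

theory Submission
  imports Defs
begin

(* Words act on normal forms a^k g1^(+-1) a^r1 ... gn^(+-1) a^rn (van der Waerden's trick for this
   HNN extension of <a>): the action respects both relators and every word is equivalent to the
   normal form it produces, so normal forms are unique.  Right multiplication by a positive stable
   letter only appends or cancels a syllable at the right end, while left multiplication by
   h = g1 ... gm (positive stable letters, g1 not repeated) works at the left end and multiplies the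
   a-exponent by p or q.  Comparing both sides of w h = h w shows that w = 1 or that the normal form
   of w ends in the syllables of h or of h^-1; stripping them shortens the normal form and keeps w in
   the centraliser, so induction gives w in <h>. *)

lemma del_step_append_context:
  "(w, w') \<in> del_step p q \<Longrightarrow> (x @ w @ y, x @ w' @ y) \<in> del_step p q"
proof (induction rule: del_step.induct)
  case (cancel u a v)
  show ?case using del_step.cancel[of "x @ u" a "v @ y" p q] by simp
next
  case (relator r u v)
  then show ?case using del_step.relator[of r p q "x @ u" "v @ y"] by simp
qed

lemma word_eq_append_context:
  assumes "(w, w') \<in> word_eq p q"
  shows "(x @ w @ y, x @ w' @ y) \<in> word_eq p q"
  using assms unfolding word_eq_def
proof (induction rule: rtrancl_induct)
  case (step v v')
  then have "(x @ v @ y, x @ v' @ y) \<in> del_step p q \<union> (del_step p q)\<inverse>"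
    using del_step_append_context by blast
  with step.IH show ?case by (rule rtrancl_into_rtrancl)
qed simp

lemma equiv_word_eq: "equiv UNIV (word_eq p q)"
  unfolding word_eq_def
  by (intro equivI refl_rtrancl sym_rtrancl sym_Un_converse trans_rtrancl) simp

lemma (in group) centraliser_eq_stabilizer:
  assumes "h \<in> carrier G"
  shows "centraliser G h = stabilizer G (\<lambda>g. \<lambda>x\<in>carrier G. g \<otimes> x \<otimes> inv g) h"
  using assms inv_solve_right[of h "_ \<otimes> h"]
  by (auto simp: centraliser_def stabilizer_def eq_commute[of _ h])

lemma (in group) subgroup_centraliser:
  assumes "h \<in> carrier G"
  shows "subgroup (centraliser G h) G"
  unfolding centraliser_eq_stabilizer[OF assms]
  using group_action.stabilizer_subgroup[OF action_by_conjugation assms] .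

lemma (in group) generate_subset_centraliser:
  assumes "h \<in> carrier G"
  shows "generate G {h} \<subseteq> centraliser G h"
proof (rule generate_subgroup_incl)
  show "{h} \<subseteq> centraliser G h" using assms by (simp add: centraliser_def)
qed (rule subgroup_centraliser[OF assms])

lemma (in group) subgroup_mult_right_iff:
  assumes "subgroup H G" "h \<in> H" "x \<in> carrier G"
  shows "x \<otimes> h \<in> H \<longleftrightarrow> x \<in> H"
proof
  have h: "h \<in> carrier G" using assms subgroup.subset by blast
  assume "x \<otimes> h \<in> H"
  then have "x \<otimes> h \<otimes> inv h \<in> H" using assms by (simp add: subgroup.m_closed subgroup.m_inv_closed)
  then show "x \<in> H" using h assms(3) by (simp add: m_assoc)
qed (use assms in \<open>simp add: subgroup.m_closed\<close>)

lemma append_commute_imp_suffix: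
  assumes comm: "xs @ ys = ys @ xs" and "ys \<noteq> []" and hd: "hd xs \<notin> set (tl xs)"
  shows "\<exists>zs. ys = zs @ xs"
proof (cases "xs = []")
  case False
  obtain m n ws where xs: "concat (replicate m ws) = xs" and ys: "concat (replicate n ws) = ys"
    using comm_append_are_replicate[OF comm] by blast
  have "m \<noteq> 0" "ws \<noteq> []" "n \<noteq> 0" using xs ys False \<open>ys \<noteq> []\<close> by auto
  have "m = 1"
  proof (rule ccontr)
    assume "m \<noteq> 1"
    with \<open>m \<noteq> 0\<close> obtain m' where "m = Suc (Suc m')" by (metis One_nat_def not0_implies_Suc)
    then have "xs = ws @ ws @ concat (replicate m' ws)" using xs by simp
    then have "hd xs \<in> set (tl xs)" using \<open>ws \<noteq> []\<close> by (cases ws) auto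
    with hd show False ..
  qed
  obtain n' where "n = Suc n'" using \<open>n \<noteq> 0\<close> not0_implies_Suc by blast
  then have "ys = concat (replicate n' ws) @ xs"
    using xs ys \<open>m = 1\<close> by (simp flip: replicate_append_same)
  then show ?thesis by blast
qed simp

locale bs_words =
  fixes p q :: nat
begin

definition word_equiv :: "letter list \<Rightarrow> letter list \<Rightarrow> bool" (infix "\<sim>" 50)
  where "u \<sim> v \<longleftrightarrow> (u, v) \<in> word_eq p q"

lemma word_equiv_refl [simp]: "u \<sim> u"
  using equiv_word_eq unfolding word_equiv_def by (blast elim: equivE dest: reflD)

lemma word_equiv_sym: "u \<sim> v \<Longrightarrow> v \<sim> u"
  using equiv_word_eq unfolding word_equiv_def by (blast elim: equivE dest: symD)

lemma word_equiv_trans [trans]: "u \<sim> v \<Longrightarrow> v \<sim> w \<Longrightarrow> u \<sim> w"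
  using equiv_word_eq unfolding word_equiv_def by (blast elim: equivE dest: transD)

lemma word_equiv_prefix: "u \<sim> v \<Longrightarrow> x @ u \<sim> x @ v"
  using word_eq_append_context[of u v p q x "[]"] by (simp add: word_equiv_def)

lemma word_equiv_suffix: "u \<sim> v \<Longrightarrow> u @ y \<sim> v @ y"
  using word_eq_append_context[of u v p q "[]" y] by (simp add: word_equiv_def)

lemma word_equiv_delete: "v \<sim> [] \<Longrightarrow> u @ v @ w \<sim> u @ w"
  using word_eq_append_context[of v "[]" p q u w] by (simp add: word_equiv_def)

lemma word_equiv_Cons: "u \<sim> v \<Longrightarrow> a # u \<sim> a # v"
  using word_equiv_prefix[of u v "[a]"] by simp

lemma word_equiv_append: "u \<sim> v \<Longrightarrow> u' \<sim> v' \<Longrightarrow> u @ u' \<sim> v @ v'"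
  by (metis word_equiv_prefix word_equiv_suffix word_equiv_trans)

lemma word_equiv_cancel_Cons: "a # inv_letter a # u \<sim> u"
  unfolding word_equiv_def word_eq_def using del_step.cancel[of "[]" a u p q] by auto

lemma word_equiv_append_cancel: "u @ [a, inv_letter a] \<sim> u"
  using word_equiv_prefix[OF word_equiv_cancel_Cons[of a "[]"], of u] by simp

lemma word_equiv_relator: "r \<in> relators p q \<Longrightarrow> r \<sim> []"
  unfolding word_equiv_def word_eq_def using del_step.relator[of r p q "[]" "[]"] by auto

definition inverse_word :: "letter list \<Rightarrow> letter list" where
  "inverse_word u = rev (map inv_letter u)"

lemma inverse_word_append_cancel: "inverse_word u @ u \<sim> []"
proof (induction u)
  case (Cons a u)
  have "inverse_word (a # u) @ a # u = inverse_word u @ (inv_letter a # inv_letter (inv_letter a) # u)"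
    by (simp add: inverse_word_def inv_letter_def)
  also have "\<dots> \<sim> inverse_word u @ u" by (intro word_equiv_prefix word_equiv_cancel_Cons)
  also have "\<dots> \<sim> []" by (rule Cons.IH)
  finally show ?case .
qed (simp add: inverse_word_def)

definition word_class :: "letter list \<Rightarrow> letter list set" where
  "word_class w = word_eq p q `` {w}"

lemma word_class_eq_iff: "word_class u = word_class v \<longleftrightarrow> u \<sim> v"
  unfolding word_class_def word_equiv_def by (rule eq_equiv_class_iff[OF equiv_word_eq]) auto

lemma carrier_BS_group: "carrier (BS_group p q) = range word_class"
  by (auto simp: BS_group_def word_class_def quotient_def)

lemma word_class_in_carrier [simp]: "word_class w \<in> carrier (BS_group p q)"
  by (simp add: carrier_BS_group)

lemma one_BS_group: "\<one>\<^bsub>BS_group p q\<^esub> = word_class []"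
  by (simp add: BS_group_def word_class_def)

lemma word_class_mult: "word_class u \<otimes>\<^bsub>BS_group p q\<^esub> word_class v = word_class (u @ v)"
proof -
  have "congruent2 (word_eq p q) (word_eq p q) (\<lambda>x y. word_eq p q `` {x @ y})"
    unfolding congruent2_def
    by (auto intro: word_equiv_append
        simp: word_class_eq_iff[unfolded word_class_def] word_equiv_def[symmetric])
  then have "(\<Union>x\<in>word_class u. \<Union>y\<in>word_class v. word_eq p q `` {x @ y}) = word_class (u @ v)"
    unfolding word_class_def by (rule UN_equiv_class2[OF equiv_word_eq equiv_word_eq _ UNIV_I UNIV_I])
  then show ?thesis by (simp add: BS_group_def word_class_def)
qed

lemma word_class_pow: "word_class u [^]\<^bsub>BS_group p q\<^esub> (n::nat) = word_class (concat (replicate n u))"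
  by (induction n) (simp_all add: one_BS_group word_class_mult replicate_append_same[symmetric])

lemma group_BS_group: "group (BS_group p q)"
proof (rule groupI)
  fix x assume "x \<in> carrier (BS_group p q)"
  then obtain u where "x = word_class u" by (auto simp: carrier_BS_group)
  then have "word_class (inverse_word u) \<otimes>\<^bsub>BS_group p q\<^esub> x = \<one>\<^bsub>BS_group p q\<^esub>"
    by (simp add: word_class_mult one_BS_group word_class_eq_iff inverse_word_append_cancel)
  then show "\<exists>y\<in>carrier (BS_group p q). y \<otimes>\<^bsub>BS_group p q\<^esub> x = \<one>\<^bsub>BS_group p q\<^esub>" by auto
qed (auto simp: carrier_BS_group word_class_mult one_BS_group)

definition apow :: "int \<Rightarrow> letter list" where
  "apow k = (if 0 \<le> k then replicate (nat k) (GA, True) else replicate (nat (- k)) (GA, False))"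

lemma apow_0 [simp]: "apow 0 = []"
  by (simp add: apow_def)

lemma apow_nonneg: "0 \<le> k \<Longrightarrow> apow k = replicate (nat k) (GA, True)"
  by (simp add: apow_def)

lemma apow_nonpos: "k \<le> 0 \<Longrightarrow> apow k = replicate (nat (- k)) (GA, False)"
  by (auto simp: apow_def)

lemma Cons_a_apow: "(GA, True) # apow k \<sim> apow (k + 1)"
proof (cases "0 \<le> k")
  case True
  then have "apow (k + 1) = (GA, True) # apow k"
    by (simp add: apow_nonneg nat_add_distrib)
  then show ?thesis by simp
next
  case False
  then have "nat (- k) = Suc (nat (- (k + 1)))" by simp
  with False have "apow k = (GA, False) # apow (k + 1)"
    by (simp add: apow_nonpos)
  then show ?thesis
    using word_equiv_cancel_Cons[of "(GA, True)" "apow (k + 1)"] by (simp add: inv_letter_def)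
qed

lemma Cons_a_inv_apow: "(GA, False) # apow k \<sim> apow (k - 1)"
proof (cases "0 < k")
  case True
  then have "nat k = Suc (nat (k - 1))" by simp
  with True have "apow k = (GA, True) # apow (k - 1)"
    by (simp add: apow_nonneg)
  then show ?thesis
    using word_equiv_cancel_Cons[of "(GA, False)" "apow (k - 1)"] by (simp add: inv_letter_def)
next
  case False
  then have "nat (- (k - 1)) = Suc (nat (- k))" by simp
  with False have "apow (k - 1) = (GA, False) # apow k"
    by (simp add: apow_nonpos)
  then show ?thesis by simp
qed

lemma apow_add: "apow k @ apow l \<sim> apow (k + l)"
proof (induction k rule: int_induct[where k = 0])
  case (step1 k)
  have "apow (k + 1) @ apow l \<sim> ((GA, True) # apow k) @ apow l"
    by (intro word_equiv_suffix word_equiv_sym[OF Cons_a_apow])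
  also have "\<dots> \<sim> (GA, True) # apow (k + l)"
    using word_equiv_Cons[OF step1(2)] by simp
  also have "\<dots> \<sim> apow (k + 1 + l)"
    using Cons_a_apow[of "k + l"] by (simp add: ac_simps)
  finally show ?case .
next
  case (step2 k)
  have "apow (k - 1) @ apow l \<sim> ((GA, False) # apow k) @ apow l"
    by (intro word_equiv_suffix word_equiv_sym[OF Cons_a_inv_apow])
  also have "\<dots> \<sim> (GA, False) # apow (k + l)"
    using word_equiv_Cons[OF step2(2)] by simp
  also have "\<dots> \<sim> apow (k - 1 + l)"
    using Cons_a_inv_apow[of "k + l"] by (simp add: algebra_simps)
  finally show ?case .
qed simp

text \<open>\<open>g a g\<^sup>-\<^sup>1 = a\<^bsup>stable_exp g\<^esup>\<close> for the stable letters \<open>g = GS, GT\<close>;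
  the value at \<open>GA\<close> is junk.\<close>

definition stable_exp :: "gen \<Rightarrow> int" where
  "stable_exp g = int (if g = GS then p else q)"

lemma apow_neg_append_cancel: "apow (- k) @ apow k \<sim> []"
  using apow_add[of "- k" k] by simp

lemma relators_eq:
  "relators p q = (\<lambda>g. [(g, True), (GA, True), (g, False)] @ apow (- stable_exp g)) ` {GS, GT}"
  by (simp add: relators_def apow_nonpos stable_exp_def)

lemma stable_gen_cases: "g \<noteq> GA \<longleftrightarrow> g \<in> {GS, GT}"
  by (cases g) auto

lemma stable_a:
  assumes "g \<noteq> GA"
  shows "[(g, True), (GA, True)] \<sim> apow (stable_exp g) @ [(g, True)]"
proof -
  have relator: "[(g, True), (GA, True), (g, False)] @ apow (- stable_exp g) \<sim> []"
    using assms by (intro word_equiv_relator) (cases g, simp_all add: relators_eq)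
  have "[(g, True), (GA, True)] \<sim> [(g, True), (GA, True)] @ [(g, False), inv_letter (g, False)]"
    by (rule word_equiv_sym[OF word_equiv_append_cancel])
  also have "\<dots> = [(g, True), (GA, True), (g, False), (g, True)]"
    by (simp add: inv_letter_def)
  also have "\<dots> \<sim> [(g, True), (GA, True), (g, False)]
      @ (apow (- stable_exp g) @ apow (stable_exp g)) @ [(g, True)]"
    using word_equiv_sym[OF word_equiv_delete[OF apow_neg_append_cancel[of "stable_exp g"],
          where u = "[(g, True), (GA, True), (g, False)]" and w = "[(g, True)]"]] by simp
  also have "\<dots> = [] @ ([(g, True), (GA, True), (g, False)] @ apow (- stable_exp g))
      @ apow (stable_exp g) @ [(g, True)]"
    by simp
  also have "\<dots> \<sim> apow (stable_exp g) @ [(g, True)]"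
    using word_equiv_delete[OF relator, where u = "[]" and w = "apow (stable_exp g) @ [(g, True)]"]
    by simp
  finally show ?thesis .
qed

lemma stable_apow:
  assumes g: "g \<noteq> GA"
  shows "(g, True) # apow k \<sim> apow (stable_exp g * k) @ [(g, True)]"
proof (induction k rule: int_induct[where k = 0])
  case (step1 k)
  have "(g, True) # apow (k + 1) \<sim> (g, True) # (GA, True) # apow k"
    by (intro word_equiv_Cons word_equiv_sym[OF Cons_a_apow])
  also have "\<dots> = [(g, True), (GA, True)] @ apow k" by simp
  also have "\<dots> \<sim> apow (stable_exp g) @ (g, True) # apow k"
    using word_equiv_suffix[OF stable_a[OF g]] by simp
  also have "\<dots> \<sim> (apow (stable_exp g) @ apow (stable_exp g * k)) @ [(g, True)]"
    using word_equiv_prefix[OF step1(2)] by simp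
  also have "\<dots> \<sim> apow (stable_exp g * (k + 1)) @ [(g, True)]"
    using word_equiv_suffix[OF apow_add] by (simp add: algebra_simps)
  finally show ?case .
next
  case (step2 k)
  have "(g, True) # apow (k - 1)
      \<sim> apow (- stable_exp g) @ (apow (stable_exp g) @ [(g, True)]) @ apow (k - 1)"
    using word_equiv_sym[OF word_equiv_delete[OF apow_neg_append_cancel, of "[]"]] by simp
  also have "\<dots> \<sim> apow (- stable_exp g) @ ((g, True) # (GA, True) # apow (k - 1))"
    using word_equiv_prefix[OF word_equiv_suffix[OF word_equiv_sym[OF stable_a[OF g]]]] by simp
  also have "\<dots> \<sim> apow (- stable_exp g) @ ((g, True) # apow k)"
    using Cons_a_apow[of "k - 1"] by (intro word_equiv_prefix word_equiv_Cons) simp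
  also have "\<dots> \<sim> (apow (- stable_exp g) @ apow (stable_exp g * k)) @ [(g, True)]"
    using word_equiv_prefix[OF step2(2)] by simp
  also have "\<dots> \<sim> apow (- stable_exp g + stable_exp g * k) @ [(g, True)]"
    by (rule word_equiv_suffix[OF apow_add])
  also have "- stable_exp g + stable_exp g * k = stable_exp g * (k - 1)"
    by (simp add: algebra_simps)
  finally show ?case .
qed simp

lemma stable_inv_apow:
  assumes g: "g \<noteq> GA"
  shows "(g, False) # apow (stable_exp g * j) \<sim> apow j @ [(g, False)]"
proof -
  have "(g, False) # apow (stable_exp g * j)
      \<sim> ((g, False) # apow (stable_exp g * j)) @ [(g, True), inv_letter (g, True)]"
    by (rule word_equiv_sym[OF word_equiv_append_cancel])
  also have "\<dots> = [(g, False)] @ (apow (stable_exp g * j) @ [(g, True)]) @ [(g, False)]"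
    by (simp add: inv_letter_def)
  also have "\<dots> \<sim> [(g, False)] @ ((g, True) # apow j) @ [(g, False)]"
    by (intro word_equiv_prefix word_equiv_suffix word_equiv_sym[OF stable_apow[OF g]])
  also have "\<dots> = (g, False) # inv_letter (g, False) # (apow j @ [(g, False)])"
    by (simp add: inv_letter_def)
  also have "\<dots> \<sim> apow j @ [(g, False)]" by (rule word_equiv_cancel_Cons)
  finally show ?thesis .
qed

end

type_synonym syllable = "letter \<times> nat"
type_synonym nform = "int \<times> syllable list"

locale bs_normal_form = bs_words +
  assumes one_less_p: "1 < p" and one_less_q: "1 < q"
begin

lemma one_less_stable_exp: "1 < stable_exp g"
  using one_less_p one_less_q by (simp add: stable_exp_def)

text \<open>A normal form \<open>(k, [((g\<^sub>1, b\<^sub>1), r\<^sub>1), \<dots>, ((g\<^sub>n, b\<^sub>n), r\<^sub>n)])\<close> stands for the word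
  \<open>a\<^sup>k g\<^sub>1\<^sup>\<plusminus>\<^sup>1 a\<^bsup>r\<^sub>1\<^esup> \<dots> g\<^sub>n\<^sup>\<plusminus>\<^sup>1 a\<^bsup>r\<^sub>n\<^esup>\<close> (see \<open>nf_word\<close>). It is reduced if \<open>r = 0\<close> after a positive
  stable letter, \<open>0 \<le> r < stable_exp g\<close> after \<open>g\<^sup>-\<^sup>1\<close>, and no \<open>g\<^sup>\<plusminus>\<^sup>1 a\<^sup>0\<close> is followed by \<open>g\<^sup>\<mp>\<^sup>1\<close>.\<close>

definition syllable_ok :: "syllable \<Rightarrow> bool" where
  "syllable_ok y \<longleftrightarrow> fst (fst y) \<noteq> GA \<and> (snd (fst y) \<longrightarrow> snd y = 0)
     \<and> (\<not> snd (fst y) \<longrightarrow> int (snd y) < stable_exp (fst (fst y)))"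

definition cancel_free :: "syllable \<Rightarrow> syllable \<Rightarrow> bool" where
  "cancel_free y z \<longleftrightarrow> (snd y = 0 \<longrightarrow> fst z \<noteq> inv_letter (fst y))"

definition reduced :: "syllable list \<Rightarrow> bool" where
  "reduced L \<longleftrightarrow> (\<forall>y\<in>set L. syllable_ok y) \<and> successively cancel_free L"

lemma reduced_Cons: "reduced (y # L) \<longleftrightarrow> syllable_ok y \<and> (L \<noteq> [] \<longrightarrow> cancel_free y (hd L)) \<and> reduced L"
  by (cases L) (auto simp: reduced_def)

text \<open>Based on \<open>g a\<^sup>k = a\<^bsup>e k\<^esup> g\<close> and \<open>g\<^sup>-\<^sup>1 a\<^sup>k = a\<^bsup>k div e\<^esup> g\<^sup>-\<^sup>1 a\<^bsup>k mod e\<^esup>\<close>,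
  where \<open>e = stable_exp g\<close>.\<close>

definition nf_lmult :: "letter \<Rightarrow> nform \<Rightarrow> nform" where
  "nf_lmult x n = (case x of (g, b) \<Rightarrow> case n of (k, L) \<Rightarrow>
     if g = GA then (if b then k + 1 else k - 1, L)
     else if b then
       (if L \<noteq> [] \<and> fst (hd L) = (g, False) then (stable_exp g * k + int (snd (hd L)), tl L)
        else (stable_exp g * k, ((g, True), 0) # L))
     else
       (if k mod stable_exp g = 0 \<and> L \<noteq> [] \<and> fst (hd L) = (g, True) then (k div stable_exp g, tl L)
        else (k div stable_exp g, ((g, False), nat (k mod stable_exp g)) # L)))"

fun nf_act :: "letter list \<Rightarrow> nform \<Rightarrow> nform" where
  "nf_act [] n = n"
| "nf_act (x # w) n = nf_lmult x (nf_act w n)"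

lemma nf_act_append [simp]: "nf_act (u @ v) n = nf_act u (nf_act v n)"
  by (induction u) auto

definition nf_of :: "letter list \<Rightarrow> nform" where
  "nf_of w = nf_act w (0, [])"

lemma nf_of_append: "nf_of (u @ w) = nf_act u (nf_of w)"
  by (simp add: nf_of_def)

lemma reduced_nf_lmult:
  assumes "reduced (snd n)"
  shows "reduced (snd (nf_lmult x n))"
proof -
  obtain g b k L where x: "x = (g, b)" and n: "n = (k, L)" by (cases x, cases n)
  have "0 \<le> k mod stable_exp g" "int (nat (k mod stable_exp g)) < stable_exp g"
    using one_less_stable_exp[of g] by simp_all
  then show ?thesis
    using assms
    by (cases L; auto simp: nf_lmult_def x n reduced_Cons syllable_ok_def cancel_free_def inv_letter_def;
        linarith)
qed

lemma reduced_nf_act: "reduced (snd n) \<Longrightarrow> reduced (snd (nf_act w n))"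
  by (induction w) (auto intro: reduced_nf_lmult)

lemma reduced_nf_of: "reduced (snd (nf_of w))"
  unfolding nf_of_def by (rule reduced_nf_act) (simp add: reduced_def)

lemma nf_lmult_stable_stable_inv:
  assumes g: "g \<noteq> GA" and red: "reduced (snd n)"
  shows "nf_lmult (g, True) (nf_lmult (g, False) n) = n"
proof -
  obtain k L where n: "n = (k, L)" by fastforce
  have div_mod: "stable_exp g * (k div stable_exp g) + k mod stable_exp g = k" by simp
  show ?thesis
  proof (cases "k mod stable_exp g = 0 \<and> L \<noteq> [] \<and> fst (hd L) = (g, True)")
    case True
    then obtain r L' where L: "L = ((g, True), r) # L'" by (cases L) auto
    have "r = 0" and "L' \<noteq> [] \<Longrightarrow> fst (hd L') \<noteq> (g, False)"
      using red g by (auto simp: n L reduced_Cons syllable_ok_def cancel_free_def inv_letter_def)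
    then show ?thesis using True g div_mod by (auto simp: nf_lmult_def n L)
  next
    case False
    then show ?thesis using g div_mod one_less_stable_exp[of g] by (auto simp: nf_lmult_def n)
  qed
qed

lemma nf_lmult_stable_inv_stable:
  assumes g: "g \<noteq> GA" and red: "reduced (snd n)"
  shows "nf_lmult (g, False) (nf_lmult (g, True) n) = n"
proof -
  obtain k L where n: "n = (k, L)" by fastforce
  have pos: "0 < stable_exp g" using one_less_stable_exp[of g] by simp
  show ?thesis
  proof (cases "L \<noteq> [] \<and> fst (hd L) = (g, False)")
    case True
    then obtain r L' where L: "L = ((g, False), r) # L'" by (cases L) auto
    have r: "int r < stable_exp g" and "r = 0 \<Longrightarrow> L' \<noteq> [] \<Longrightarrow> fst (hd L') \<noteq> (g, True)"
      using red g by (auto simp: n L reduced_Cons syllable_ok_def cancel_free_def inv_letter_def)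
    moreover have "(stable_exp g * k + int r) div stable_exp g = k"
      and "(stable_exp g * k + int r) mod stable_exp g = int r"
      using r pos by simp_all
    ultimately show ?thesis using True g by (auto simp: nf_lmult_def n L)
  next
    case False
    then show ?thesis using g pos by (auto simp: nf_lmult_def n)
  qed
qed

lemma nf_lmult_inv_letter:
  assumes "reduced (snd n)"
  shows "nf_lmult x (nf_lmult (inv_letter x) n) = n"
proof -
  obtain g b where x: "x = (g, b)" by fastforce
  show ?thesis
  proof (cases "g = GA")
    case True
    then show ?thesis by (cases n) (auto simp: nf_lmult_def x inv_letter_def)
  next
    case False
    then show ?thesis
      using assms nf_lmult_stable_stable_inv nf_lmult_stable_inv_stable
      by (cases b) (auto simp: x inv_letter_def)
  qed
qed

lemma nf_act_apow: "nf_act (apow k) n = (fst n + k, snd n)"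
proof -
  have "nf_act (replicate m (GA, b)) n = (if b then fst n + int m else fst n - int m, snd n)" for m b
    by (induction m) (auto simp: nf_lmult_def split: prod.split)
  then show ?thesis by (simp add: apow_def)
qed

lemma nf_lmult_stable_a:
  assumes "g \<noteq> GA"
  shows "nf_lmult (g, True) (nf_lmult (GA, True) n) = nf_act (apow (stable_exp g)) (nf_lmult (g, True) n)"
  using assms by (cases n) (simp add: nf_lmult_def nf_act_apow algebra_simps)

lemma nf_act_relator:
  assumes "r \<in> relators p q" and red: "reduced (snd n)"
  shows "nf_act r n = n"
proof -
  obtain g where g: "g \<noteq> GA" and r: "r = [(g, True), (GA, True), (g, False)] @ apow (- stable_exp g)"
    using assms(1) stable_gen_cases by (auto simp: relators_eq)
  define m where "m = nf_act (apow (- stable_exp g)) n"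
  have "reduced (snd m)" using red by (simp add: m_def nf_act_apow)
  have "nf_act r n = nf_lmult (g, True) (nf_lmult (GA, True) (nf_lmult (g, False) m))"
    by (simp add: r m_def)
  also have "\<dots> = nf_act (apow (stable_exp g)) (nf_lmult (g, True) (nf_lmult (g, False) m))"
    by (rule nf_lmult_stable_a[OF g])
  also have "nf_lmult (g, True) (nf_lmult (g, False) m) = m"
    by (rule nf_lmult_stable_stable_inv[OF g \<open>reduced (snd m)\<close>])
  finally show ?thesis by (simp add: m_def nf_act_apow)
qed

lemma nf_act_del_step: "(u, v) \<in> del_step p q \<Longrightarrow> reduced (snd n) \<Longrightarrow> nf_act u n = nf_act v n"
proof (induction rule: del_step.induct)
  case (cancel u x v)
  then show ?case using nf_lmult_inv_letter[OF reduced_nf_act] by simp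
next
  case (relator r u v)
  then show ?case using nf_act_relator reduced_nf_act by simp
qed

lemma nf_act_word_equiv:
  assumes "u \<sim> v" and "reduced (snd n)"
  shows "nf_act u n = nf_act v n"
  using assms unfolding word_equiv_def word_eq_def
  by (induction rule: rtrancl_induct) (auto dest: nf_act_del_step)

lemma nf_of_eq_if_word_equiv: "u \<sim> v \<Longrightarrow> nf_of u = nf_of v"
  by (simp add: nf_of_def nf_act_word_equiv reduced_def)

definition syllables_word :: "syllable list \<Rightarrow> letter list" where
  "syllables_word L = concat (map (\<lambda>(x, r). x # apow (int r)) L)"

lemma syllables_word_Nil [simp]: "syllables_word [] = []"
  and syllables_word_Cons [simp]: "syllables_word ((x, r) # L) = x # apow (int r) @ syllables_word L"
  by (simp_all add: syllables_word_def)

definition nf_word :: "nform \<Rightarrow> letter list" where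
  "nf_word n = apow (fst n) @ syllables_word (snd n)"

lemma nf_word_lmult_a: "(GA, b) # nf_word n \<sim> nf_word (nf_lmult (GA, b) n)"
  using word_equiv_suffix[OF Cons_a_apow[of "fst n"]] word_equiv_suffix[OF Cons_a_inv_apow[of "fst n"]]
  by (cases n) (simp add: nf_lmult_def nf_word_def)

lemma nf_word_lmult_stable:
  assumes g: "g \<noteq> GA"
  shows "(g, True) # nf_word n \<sim> nf_word (nf_lmult (g, True) n)"
proof -
  obtain k L where n: "n = (k, L)" by fastforce
  have pushed: "(g, True) # nf_word n \<sim> apow (stable_exp g * k) @ (g, True) # syllables_word L"
    using word_equiv_suffix[OF stable_apow[OF g, of k]] by (simp add: n nf_word_def)
  show ?thesis
  proof (cases "L \<noteq> [] \<and> fst (hd L) = (g, False)")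
    case True
    then obtain r L' where L: "L = ((g, False), r) # L'" by (cases L) auto
    note pushed
    also have "apow (stable_exp g * k) @ (g, True) # syllables_word L
        = apow (stable_exp g * k) @ ((g, True) # inv_letter (g, True) # apow (int r) @ syllables_word L')"
      by (simp add: L inv_letter_def)
    also have "\<dots> \<sim> (apow (stable_exp g * k) @ apow (int r)) @ syllables_word L'"
      using word_equiv_prefix[OF word_equiv_cancel_Cons] by simp
    also have "\<dots> \<sim> apow (stable_exp g * k + int r) @ syllables_word L'"
      by (rule word_equiv_suffix[OF apow_add])
    also have "\<dots> = nf_word (nf_lmult (g, True) n)"
      using g by (simp add: nf_lmult_def n L nf_word_def)
    finally show ?thesis .
  next
    case False
    then show ?thesis using pushed g by (auto simp: nf_lmult_def n nf_word_def)
  qed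
qed

lemma nf_word_lmult_stable_inv:
  assumes g: "g \<noteq> GA" and red: "reduced (snd n)"
  shows "(g, False) # nf_word n \<sim> nf_word (nf_lmult (g, False) n)"
proof -
  obtain k L where n: "n = (k, L)" by fastforce
  define j r where "j = k div stable_exp g" and "r = k mod stable_exp g"
  have k: "k = stable_exp g * j + r" by (simp add: j_def r_def)
  have "0 \<le> r" using one_less_stable_exp[of g] by (simp add: r_def)
  have pulled: "(g, False) # nf_word n \<sim> apow j @ (g, False) # apow r @ syllables_word L"
  proof -
    have "apow k @ syllables_word L \<sim> (apow (stable_exp g * j) @ apow r) @ syllables_word L"
      unfolding k by (rule word_equiv_suffix[OF word_equiv_sym[OF apow_add]])
    then have "(g, False) # nf_word n \<sim> (g, False) # (apow (stable_exp g * j) @ apow r) @ syllables_word L"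
      using word_equiv_Cons by (simp add: n nf_word_def)
    also have "\<dots> = ((g, False) # apow (stable_exp g * j)) @ apow r @ syllables_word L" by simp
    also have "\<dots> \<sim> (apow j @ [(g, False)]) @ apow r @ syllables_word L"
      by (rule word_equiv_suffix[OF stable_inv_apow[OF g]])
    finally show ?thesis by simp
  qed
  show ?thesis
  proof (cases "r = 0 \<and> L \<noteq> [] \<and> fst (hd L) = (g, True)")
    case True
    then obtain r' L' where L: "L = ((g, True), r') # L'" by (cases L) auto
    have "r' = 0" using red g by (simp add: n L reduced_Cons syllable_ok_def)
    note pulled
    also have "apow j @ (g, False) # apow r @ syllables_word L
        = apow j @ ((g, False) # inv_letter (g, False) # syllables_word L')"
      using True \<open>r' = 0\<close> by (simp add: L inv_letter_def)
    also have "\<dots> \<sim> apow j @ syllables_word L'" by (rule word_equiv_prefix[OF word_equiv_cancel_Cons])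
    also have "\<dots> = nf_word (nf_lmult (g, False) n)"
      using True g by (simp add: nf_lmult_def n L nf_word_def j_def r_def)
    finally show ?thesis .
  next
    case False
    then have "nf_lmult (g, False) n = (j, ((g, False), nat r) # L)"
      using g by (auto simp: nf_lmult_def n j_def r_def)
    then show ?thesis using pulled \<open>0 \<le> r\<close> by (simp add: nf_word_def)
  qed
qed

lemma nf_word_lmult: "reduced (snd n) \<Longrightarrow> x # nf_word n \<sim> nf_word (nf_lmult x n)"
  using nf_word_lmult_a nf_word_lmult_stable nf_word_lmult_stable_inv
  by (cases x, metis (full_types))

lemma word_equiv_nf_word_nf_of: "w \<sim> nf_word (nf_of w)"
proof (induction w)
  case Nil
  then show ?case by (simp add: nf_of_def nf_word_def)
next
  case (Cons x w)
  have "x # w \<sim> x # nf_word (nf_of w)" by (rule word_equiv_Cons[OF Cons.IH])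
  also have "\<dots> \<sim> nf_word (nf_lmult x (nf_of w))" by (rule nf_word_lmult[OF reduced_nf_of])
  finally show ?case by (simp add: nf_of_def)
qed

lemma nf_of_eq_iff: "nf_of u = nf_of v \<longleftrightarrow> u \<sim> v"
  using word_equiv_nf_word_nf_of[of u] word_equiv_nf_word_nf_of[of v]
  by (metis nf_of_eq_if_word_equiv word_equiv_sym word_equiv_trans)

lemma nf_act_syllables_word: "reduced L \<Longrightarrow> nf_act (syllables_word L) (0, []) = (0, L)"
proof (induction L)
  case (Cons y L)
  obtain g b r where y: "y = ((g, b), r)" by (cases y) auto
  have ok: "syllable_ok y" and red: "reduced L" and free: "L \<noteq> [] \<Longrightarrow> cancel_free y (hd L)"
    using Cons.prems by (simp_all add: reduced_Cons)
  have "g \<noteq> GA" using ok by (simp add: syllable_ok_def y)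
  have "nf_act (syllables_word (y # L)) (0, []) = nf_lmult (g, b) (int r, L)"
    using Cons.IH[OF red] by (simp add: nf_act_apow y)
  also have "\<dots> = (0, y # L)"
    using ok free \<open>g \<noteq> GA\<close> one_less_stable_exp[of g]
    by (cases L) (auto simp: nf_lmult_def y syllable_ok_def cancel_free_def inv_letter_def)
  finally show ?case .
qed simp

lemma nf_of_nf_word: "reduced L \<Longrightarrow> nf_of (nf_word (k, L)) = (k, L)"
  by (simp add: nf_of_def nf_word_def nf_act_syllables_word nf_act_apow)

definition pos_syllable :: "gen \<Rightarrow> syllable" where
  "pos_syllable g = ((g, True), 0)"

definition neg_syllable :: "gen \<Rightarrow> syllable" where
  "neg_syllable g = ((g, False), 0)"

definition nf_rmult :: "gen \<Rightarrow> nform \<Rightarrow> nform" where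
  "nf_rmult g n = (case n of (k, L) \<Rightarrow>
     if L \<noteq> [] \<and> last L = neg_syllable g then (k, butlast L) else (k, L @ [pos_syllable g]))"

lemma nf_lmult_nf_rmult:
  assumes "g \<noteq> GA"
  shows "nf_lmult x (nf_rmult g n) = nf_rmult g (nf_lmult x n)"
proof -
  obtain h b k L where x: "x = (h, b)" and n: "n = (k, L)" by (cases x, cases n)
  have "0 \<le> k mod stable_exp h" using one_less_stable_exp[of h] by simp
  then show ?thesis
    using assms
    by (cases L; cases "tl L") (auto simp: nf_lmult_def nf_rmult_def pos_syllable_def neg_syllable_def x n)
qed

lemma nf_act_nf_rmult: "g \<noteq> GA \<Longrightarrow> nf_act w (nf_rmult g n) = nf_rmult g (nf_act w n)"
  by (induction w) (simp_all add: nf_lmult_nf_rmult)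

lemma nf_of_snoc_stable:
  assumes "g \<noteq> GA"
  shows "nf_of (w @ [(g, True)]) = nf_rmult g (nf_of w)"
proof -
  have "nf_lmult (g, True) (0, []) = nf_rmult g (0, [])"
    using assms by (simp add: nf_lmult_def nf_rmult_def pos_syllable_def)
  then show ?thesis using nf_act_nf_rmult[OF assms] by (simp add: nf_of_def)
qed

abbreviation pos_word :: "gen list \<Rightarrow> letter list" where
  "pos_word ys \<equiv> map (\<lambda>g. (g, True)) ys"

lemma nf_of_append_pos_word:
  "GA \<notin> set ys \<Longrightarrow> nf_of (w @ pos_word ys) = fold nf_rmult ys (nf_of w)"
proof (induction ys arbitrary: w)
  case (Cons y ys)
  then have "y \<noteq> GA" by auto
  then show ?case using nf_of_snoc_stable[of y w] Cons.IH[of "w @ [(y, True)]"] Cons.prems by simp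
qed simp

lemma fold_nf_rmult_cancel: "fold nf_rmult ys (k, L @ map neg_syllable (rev ys)) = (k, L)"
  by (induction ys arbitrary: L) (simp_all add: nf_rmult_def neg_syllable_def butlast_append)

lemma fold_nf_rmult_append:
  assumes "reduced (L @ map pos_syllable ys)"
  shows "fold nf_rmult ys (k, L) = (k, L @ map pos_syllable ys)"
  using assms
proof (induction ys arbitrary: L)
  case (Cons y ys)
  have "L = [] \<or> last L \<noteq> neg_syllable y"
    using Cons.prems
    by (auto simp: reduced_def successively_append_iff cancel_free_def pos_syllable_def
        neg_syllable_def inv_letter_def)
  then have "nf_rmult y (k, L) = (k, L @ [pos_syllable y])"
    by (auto simp: nf_rmult_def pos_syllable_def neg_syllable_def)
  then show ?case using Cons.IH[of "L @ [pos_syllable y]"] Cons.prems by simp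
qed simp

lemma fold_nf_rmult_shape:
  "\<exists>ys1 ys2 L1. ys = ys1 @ ys2 \<and> L = L1 @ map neg_syllable (rev ys1)
     \<and> fold nf_rmult ys (k, L) = (k, L1 @ map pos_syllable ys2)"
proof (induction ys arbitrary: L)
  case (Cons y ys)
  show ?case
  proof (cases "L \<noteq> [] \<and> last L = neg_syllable y")
    case True
    then obtain L0 where L: "L = L0 @ [neg_syllable y]" by (metis append_butlast_last_id)
    then have "nf_rmult y (k, L) = (k, L0)" by (simp add: nf_rmult_def neg_syllable_def)
    moreover obtain ys1 ys2 L1 where "ys = ys1 @ ys2" "L0 = L1 @ map neg_syllable (rev ys1)"
      "fold nf_rmult ys (k, L0) = (k, L1 @ map pos_syllable ys2)"
      using Cons.IH[of L0] by blast
    ultimately have "y # ys = (y # ys1) @ ys2 \<and> L = L1 @ map neg_syllable (rev (y # ys1))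
        \<and> fold nf_rmult (y # ys) (k, L) = (k, L1 @ map pos_syllable ys2)"
      using L by simp
    then show ?thesis by blast
  next
    case False
    then have "nf_rmult y (k, L) = (k, L @ [pos_syllable y])"
      by (auto simp: nf_rmult_def pos_syllable_def neg_syllable_def)
    moreover obtain ys1 ys2 L1 where "ys = ys1 @ ys2" "L @ [pos_syllable y] = L1 @ map neg_syllable (rev ys1)"
      "fold nf_rmult ys (k, L @ [pos_syllable y]) = (k, L1 @ map pos_syllable ys2)"
      using Cons.IH[of "L @ [pos_syllable y]"] by blast
    moreover have "ys1 = []"
    proof (rule ccontr)
      assume "ys1 \<noteq> []"
      then have "last (L1 @ map neg_syllable (rev ys1)) = neg_syllable (hd ys1)"
        by (simp add: last_map last_rev)
      then have "pos_syllable y = neg_syllable (hd ys1)"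
        using \<open>L @ [pos_syllable y] = _\<close> by (metis last_snoc)
      then show False by (simp add: pos_syllable_def neg_syllable_def)
    qed
    ultimately have "y # ys = [] @ (y # ys) \<and> L = L @ map neg_syllable (rev [])
        \<and> fold nf_rmult (y # ys) (k, L) = (k, L @ map pos_syllable (y # ys))"
      by simp
    then show ?thesis by blast
  qed
qed simp

lemma nf_act_pos_word_shape:
  assumes "GA \<notin> set ys"
  shows "\<exists>ys1 ys2 L1 L2. ys = ys1 @ ys2 \<and> L = L1 @ L2 \<and> map fst L1 = map (\<lambda>g. (g, False)) (rev ys2)
     \<and> snd (nf_act (pos_word ys) (k, L)) = map pos_syllable ys1 @ L2
     \<and> (ys2 = [] \<longrightarrow> fst (nf_act (pos_word ys) (k, L)) = prod_list (map stable_exp ys) * k)"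
  using assms
proof (induction ys)
  case (Cons y ys)
  then have y: "y \<noteq> GA" by auto
  obtain ys1 ys2 L1 L2 m where ys: "ys = ys1 @ ys2" and L: "L = L1 @ L2"
    and L1: "map fst L1 = map (\<lambda>g. (g, False)) (rev ys2)"
    and act: "nf_act (pos_word ys) (k, L) = (m, map pos_syllable ys1 @ L2)"
    and m: "ys2 = [] \<longrightarrow> m = prod_list (map stable_exp ys) * k"
    using Cons by (metis list.set_intros(2) prod.collapse)
  show ?case
  proof (cases "ys1 = [] \<and> L2 \<noteq> [] \<and> fst (hd L2) = (y, False)")
    case True
    then have "y # ys = [] @ (y # ys2) \<and> L = (L1 @ [hd L2]) @ tl L2
        \<and> map fst (L1 @ [hd L2]) = map (\<lambda>g. (g, False)) (rev (y # ys2))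
        \<and> snd (nf_act (pos_word (y # ys)) (k, L)) = map pos_syllable [] @ tl L2"
      using ys L L1 act y by (simp add: nf_lmult_def)
    then show ?thesis by blast
  next
    case False
    then have act': "nf_act (pos_word (y # ys)) (k, L)
        = (stable_exp y * m, map pos_syllable (y # ys1) @ L2)"
      using act y by (cases ys1) (auto simp: nf_lmult_def pos_syllable_def)
    have "y # ys = (y # ys1) @ ys2" using ys by simp
    moreover have "snd (nf_act (pos_word (y # ys)) (k, L)) = map pos_syllable (y # ys1) @ L2"
      using act' by simp
    moreover have "ys2 = [] \<longrightarrow>
        fst (nf_act (pos_word (y # ys)) (k, L)) = prod_list (map stable_exp (y # ys)) * k"
      using act' m by simp
    ultimately show ?thesis using L L1 by blast
  qed
qed simp

lemma one_less_prod_stable_exp: "ys \<noteq> [] \<Longrightarrow> 1 < prod_list (map stable_exp ys)"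
proof (induction ys)
  case (Cons y ys)
  have "1 \<le> prod_list (map stable_exp ys)"
    using Cons by (cases "ys = []") auto
  then show ?case
    using one_less_stable_exp[of y] by (simp add: less_1_mult less_le_trans mult_le_cancel_left1)
qed simp

text \<open>If the right factor cancels the final syllable \<open>g\<^sup>-\<^sup>1 a\<^sup>0\<close> of \<open>L\<close> (\<open>g = hd ys\<close>) but not all of
  \<open>ys\<close>, the right product ends in a positive syllable. On the left that final syllable survives
  unless all of \<open>L\<close> is cancelled, which needs \<open>g\<close> to occur again in \<open>tl ys\<close>.\<close>

lemma commuting_nf_cancel_all:
  assumes ys: "GA \<notin> set ys" "hd ys \<notin> set (tl ys)"
    and split: "ys = c1 @ c2" "c1 \<noteq> []" "L = L1 @ map neg_syllable (rev c1)"
    and comm: "snd (nf_act (pos_word ys) (k, L)) = L1 @ map pos_syllable c2"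
  shows "c2 = []"
proof (rule ccontr)
  assume "c2 \<noteq> []"
  obtain a1 a2 b1 b2 where l: "ys = a1 @ a2" "L = b1 @ b2" "map fst b1 = map (\<lambda>g. (g, False)) (rev a2)"
    and left: "map pos_syllable a1 @ b2 = L1 @ map pos_syllable c2"
    using nf_act_pos_word_shape[OF ys(1), of L k] comm by auto
  have last_L: "last L = neg_syllable (hd ys)"
    using split by (simp add: last_map last_rev)
  show False
  proof (cases "b2 = []")
    case False
    then have "last L = last (map pos_syllable a1 @ b2)" using l(2) by simp
    also have "\<dots> = pos_syllable (last c2)" using left \<open>c2 \<noteq> []\<close> by (simp add: last_map)
    finally show False using last_L by (simp add: pos_syllable_def neg_syllable_def)
  next
    case True
    have "a1 \<noteq> []" using left True \<open>c2 \<noteq> []\<close> by (auto dest: arg_cong[of _ _ length])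
    have "L \<noteq> []" using split by simp
    then have "fst (last L) \<in> set (map fst b1)" using l(2) True by simp
    then have "hd ys \<in> set a2" using l(3) last_L by (auto simp: neg_syllable_def)
    moreover have "set a2 \<subseteq> set (tl ys)" using l(1) \<open>a1 \<noteq> []\<close> by (cases a1) auto
    ultimately show False using ys(2) by auto
  qed
qed

lemma commuting_nf_no_cancel:
  assumes ys: "ys \<noteq> []" "GA \<notin> set ys" "hd ys \<notin> set (tl ys)"
    and comm: "nf_act (pos_word ys) (k, L) = (k, L @ map pos_syllable ys)"
  shows "L = [] \<and> k = 0 \<or> (\<exists>L0. L = L0 @ map pos_syllable ys)"
proof -
  obtain a1 a2 b1 b2 where l: "ys = a1 @ a2" "L = b1 @ b2" "map fst b1 = map (\<lambda>g. (g, False)) (rev a2)"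
    and snd_left: "snd (nf_act (pos_word ys) (k, L)) = map pos_syllable a1 @ b2"
    and fst_left: "a2 = [] \<longrightarrow> fst (nf_act (pos_word ys) (k, L)) = prod_list (map stable_exp ys) * k"
    using nf_act_pos_word_shape[OF ys(2), of L k] by blast
  have left: "map pos_syllable a1 @ b2 = L @ map pos_syllable ys"
    using snd_left unfolding comm by simp
  have "length b1 = length a2" using arg_cong[OF l(3), of length] by simp
  moreover have "length a1 + length b2 = length L + length ys" using arg_cong[OF left, of length] by simp
  ultimately have "a2 = []" using l(1,2) by simp
  then have commute: "map pos_syllable ys @ L = L @ map pos_syllable ys"
    using l left \<open>length b1 = length a2\<close> by simp
  have k: "k = prod_list (map stable_exp ys) * k"
    using fst_left \<open>a2 = []\<close> unfolding comm by simp
  show ?thesis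
  proof (cases "L = []")
    case True
    then show ?thesis using k one_less_prod_stable_exp[OF ys(1)] by auto
  next
    case False
    have "inj pos_syllable" by (simp add: inj_def pos_syllable_def)
    then have "hd (map pos_syllable ys) \<notin> set (tl (map pos_syllable ys))"
      using ys(1,3) by (simp add: hd_map map_tl[symmetric] inj_image_mem_iff)
    then show ?thesis using append_commute_imp_suffix[OF commute False] by blast
  qed
qed

lemma commuting_nf_cases:
  assumes ys: "ys \<noteq> []" "GA \<notin> set ys" "hd ys \<notin> set (tl ys)"
    and comm: "nf_act (pos_word ys) (k, L) = fold nf_rmult ys (k, L)"
  shows "L = [] \<and> k = 0 \<or> (\<exists>L0. L = L0 @ map pos_syllable ys)
    \<or> (\<exists>L0. L = L0 @ map neg_syllable (rev ys))"
proof -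
  obtain c1 c2 L1 where right: "ys = c1 @ c2" "L = L1 @ map neg_syllable (rev c1)"
    "fold nf_rmult ys (k, L) = (k, L1 @ map pos_syllable c2)"
    using fold_nf_rmult_shape by blast
  show ?thesis
  proof (cases "c1 = []")
    case True
    then have "nf_act (pos_word ys) (k, L) = (k, L @ map pos_syllable ys)" using comm right by simp
    then show ?thesis using commuting_nf_no_cancel[OF ys] by blast
  next
    case False
    then have "c2 = []"
      using commuting_nf_cancel_all[OF ys(2,3) right(1) False right(2), of k] comm right(3) by simp
    then show ?thesis using right by simp
  qed
qed

lemma commuting_word_cases:
  assumes ys: "ys \<noteq> []" "GA \<notin> set ys" "hd ys \<notin> set (tl ys)"
    and comm: "pos_word ys @ w \<sim> w @ pos_word ys"
  shows "w \<sim> [] \<or> (\<exists>w'. w \<sim> w' @ pos_word ys \<and> length (snd (nf_of w')) < length (snd (nf_of w)))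
    \<or> length (snd (nf_of (w @ pos_word ys))) < length (snd (nf_of w))"
proof -
  obtain k L where w: "nf_of w = (k, L)" by fastforce
  have red: "reduced L" using reduced_nf_of[of w] w by simp
  have "nf_of (pos_word ys @ w) = nf_of (w @ pos_word ys)"
    using comm by (simp add: nf_of_eq_iff)
  then have "nf_act (pos_word ys) (k, L) = fold nf_rmult ys (k, L)"
    by (simp only: nf_of_append[of "pos_word ys"] nf_of_append_pos_word[OF ys(2)] w)
  then consider "L = [] \<and> k = 0" | L0 where "L = L0 @ map pos_syllable ys"
    | L0 where "L = L0 @ map neg_syllable (rev ys)"
    using commuting_nf_cases[OF ys] by blast
  then show ?thesis
  proof cases
    case 1
    then have "w \<sim> []" using w by (simp flip: nf_of_eq_iff add: nf_of_def)
    then show ?thesis ..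
  next
    case (2 L0)
    have "reduced L0" using red 2 by (simp add: reduced_def successively_append_iff)
    then have w': "nf_of (nf_word (k, L0)) = (k, L0)" by (rule nf_of_nf_word)
    then have "nf_of (nf_word (k, L0) @ pos_word ys) = nf_of w"
      using fold_nf_rmult_append red 2 w by (simp add: nf_of_append_pos_word ys)
    then have "w \<sim> nf_word (k, L0) @ pos_word ys
        \<and> length (snd (nf_of (nf_word (k, L0)))) < length (snd (nf_of w))"
      using w w' 2 ys(1) by (simp flip: nf_of_eq_iff)
    then show ?thesis by blast
  next
    case (3 L0)
    then have "nf_of (w @ pos_word ys) = (k, L0)"
      by (simp add: nf_of_append_pos_word ys w fold_nf_rmult_cancel)
    then show ?thesis using w 3 ys(1) by simp
  qed
qed

lemma centraliser_pos_word_subset: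
  assumes ys: "ys \<noteq> []" "GA \<notin> set ys" "hd ys \<notin> set (tl ys)"
  defines "h \<equiv> word_class (pos_word ys)"
  shows "centraliser (BS_group p q) h \<subseteq> generate (BS_group p q) {h}"
proof -
  interpret group "BS_group p q" by (rule group_BS_group)
  have "subgroup (centraliser (BS_group p q) h) (BS_group p q)"
    by (rule subgroup_centraliser) (simp add: h_def)
  moreover have "subgroup (generate (BS_group p q) {h}) (BS_group p q)"
    by (rule generate_is_subgroup) (simp add: h_def)
  moreover have "h \<in> centraliser (BS_group p q) h" by (simp add: h_def centraliser_def)
  moreover have "h \<in> generate (BS_group p q) {h}" by (rule generate.incl) simp
  ultimately have centraliser_iff: "word_class w \<otimes>\<^bsub>BS_group p q\<^esub> h \<in> centraliser (BS_group p q) h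
        \<longleftrightarrow> word_class w \<in> centraliser (BS_group p q) h"
    and generate_iff: "word_class w \<otimes>\<^bsub>BS_group p q\<^esub> h \<in> generate (BS_group p q) {h}
        \<longleftrightarrow> word_class w \<in> generate (BS_group p q) {h}" for w
    by (simp_all add: subgroup_mult_right_iff)
  have "word_class w \<in> generate (BS_group p q) {h}"
    if "word_class w \<in> centraliser (BS_group p q) h" for w
    using that
  proof (induction "length (snd (nf_of w))" arbitrary: w rule: less_induct)
    case less
    have "pos_word ys @ w \<sim> w @ pos_word ys"
      using less.prems by (simp add: centraliser_def h_def word_class_mult word_class_eq_iff)
    from commuting_word_cases[OF ys this] show ?case
    proof (elim disjE exE conjE)
      assume "w \<sim> []"
      then show ?thesis by (simp add: word_class_eq_iff[symmetric] one_BS_group[symmetric] generate.one)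
    next
      fix w' assume "w \<sim> w' @ pos_word ys" and shorter: "length (snd (nf_of w')) < length (snd (nf_of w))"
      then have "word_class w = word_class w' \<otimes>\<^bsub>BS_group p q\<^esub> h"
        by (simp add: h_def word_class_mult word_class_eq_iff)
      then show ?thesis using less shorter by (simp add: centraliser_iff generate_iff)
    next
      assume shorter: "length (snd (nf_of (w @ pos_word ys))) < length (snd (nf_of w))"
      have "word_class (w @ pos_word ys) = word_class w \<otimes>\<^bsub>BS_group p q\<^esub> h"
        by (simp add: h_def word_class_mult)
      then show ?thesis using less.hyps[OF shorter] less.prems
        by (simp add: centraliser_iff generate_iff)
    qed
  qed
  then show ?thesis by (auto simp: centraliser_def carrier_BS_group)
qed

theorem centraliser_pos_word:
  assumes "ys \<noteq> []" "GA \<notin> set ys" "hd ys \<notin> set (tl ys)"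
  shows "centraliser (BS_group p q) (word_class (pos_word ys))
    = generate (BS_group p q) {word_class (pos_word ys)}"
  using centraliser_pos_word_subset[OF assms] group.generate_subset_centraliser[OF group_BS_group]
  by (simp add: subset_antisym)

end

theorem lemma3p2:
  fixes p q :: nat
  assumes "Factorial_Ring.prime p" and "Factorial_Ring.prime q" and "p \<noteq> q"
  defines "G \<equiv> BS_group p q"
    and "s \<equiv> gen_elem p q GS"
    and "t \<equiv> gen_elem p q GT"
  shows "centraliser G t = generate G {t}
       \<and> centraliser G s = generate G {s}
       \<and> (\<forall>i::nat. centraliser G (s \<otimes>\<^bsub>G\<^esub> t [^]\<^bsub>G\<^esub> i)
                   = generate G {s \<otimes>\<^bsub>G\<^esub> t [^]\<^bsub>G\<^esub> i})"
proof -
  have "1 < p" "1 < q" using assms(1,2) prime_gt_1_nat by blast+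
  then interpret bs_normal_form p q by unfold_locales
  have gen: "gen_elem p q g = word_class (pos_word [g])" for g
    by (simp add: gen_elem_def word_class_def)
  have "s \<otimes>\<^bsub>G\<^esub> t [^]\<^bsub>G\<^esub> i = word_class (pos_word (GS # replicate i GT))" for i :: nat
    by (simp add: s_def t_def G_def gen word_class_pow word_class_mult map_replicate
        flip: map_concat)
  then show ?thesis
    by (simp add: s_def t_def G_def gen centraliser_pos_word del: list.map)
qed

end
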